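(* Let $d$ be a sufficiently large integer and let $X,Y\subset\mathbb{R}^d$ be finite sets with $|Y|=C|X|$, where $C\leq\log|X|$, and such that the affine hull of $X+Y=\{x+y:x\in X,y\in Y\}$ has dimension $d$. Define $K$ by $|X|+|Y|=K(d+2)$. If $K\leq\log|X|$, then $$|X+Y|\geq\frac{|X||Y|}{2^{10}\log^2|X|}.$$ *)

theory Defs
  imports "HOL-Analysis.Analysis" "HOL-Library.Function_Algebras"
begin

text \<open>Points of R^d are represented as functions nat => real vanishing at all
  coordinates i >= d.  To use the library notions affine hull and affine
  dependence, the function space is made a real vector space pointwise.\<close>

instantiation "fun" :: (type, real_vector) real_vector
begin
definition scaleR_fun :: "real \<Rightarrow> ('a \<Rightarrow> 'b) \<Rightarrow> 'a \<Rightarrow> 'b"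
  where "scaleR_fun r f = (\<lambda>x. r *\<^sub>R f x)"
instance
  by standard (auto simp: scaleR_fun_def fun_eq_iff scaleR_add_right scaleR_add_left plus_fun_def)
end

definition Rd :: "nat \<Rightarrow> (nat \<Rightarrow> real) set" where
  "Rd d = {x. \<forall>i\<ge>d. x i = 0}"

text \<open>Affine dimension, defined literally as in the library (HOL-Analysis aff_dim),
  but for an arbitrary real vector space.\<close>
definition gen_aff_dim :: "('a::real_vector) set \<Rightarrow> int" where
  "gen_aff_dim V =
  (SOME d :: int.
    \<exists>B. affine hull B = affine hull V \<and> \<not> affine_dependent B \<and> of_nat (card B) = d + 1)"

definition sumset :: "('a::plus) set \<Rightarrow> 'a set \<Rightarrow> 'a set" where
  "sumset X Y = {x + y | x y. x \<in> X \<and> y \<in> Y}"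

end

theory Submission
  imports Defs
begin

text \<open>Translate X and Y by points x0, y0 so that the translates X0, Y0 contain 0; they span a
  space of dimension d. If P \<subseteq> X0 and Q \<subseteq> Y0 are disjoint with P \<union> Q linearly independent
  and X0 \<subseteq> span P, then the sums x + y0 + v with x \<in> X and v \<in> Q \<union> {0} are pairwise distinct,
  so |X + Y| \<ge> |X| (|Q| + 1). Extending a basis of X0 (of Y0) to a basis of X0 \<union> Y0 gives
  |X + Y| \<ge> |X| (d - dim X0 + 1) (resp. |Y| (d - dim Y0 + 1)); applying the same count to the
  subset x0 + ({0} \<union> P1) of X, where P1 consists of k = \<lfloor>dim Y0 / 2\<rfloor> vectors of a basis of X0,
  gives |X + Y| \<ge> (k + 1)^2 when both dim X0 and dim Y0 exceed d/2.
  So |X + Y| is at least |X| (d + 2)/2, |Y| (d + 2)/2 or (d + 2)^2/16, and each of these beats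
  |X| |Y| / (2^10 log^2 |X|) because |X|, |Y| \<le> (d + 2) log |X|.\<close>

lemma sumset_commute: "sumset X Y = sumset Y (X :: 'a::ab_semigroup_add set)"
  unfolding sumset_def by (metis add.commute)

lemma sumset_mono: "X' \<subseteq> X \<Longrightarrow> sumset X' Y \<subseteq> sumset X Y"
  unfolding sumset_def by blast

lemma finite_sumset: "finite X \<Longrightarrow> finite Y \<Longrightarrow> finite (sumset X Y)"
  unfolding sumset_def by (simp add: finite_image_set2)

lemma dim_subset_finite:
  fixes S T :: "'a::real_vector set"
  assumes "S \<subseteq> T" "finite T"
  shows "dim S \<le> dim T"
proof -
  obtain B where B: "B \<subseteq> T" "T \<subseteq> span B" "card B = dim T"
    by (rule basis_exists)
  have "dim S \<le> card B"
    using assms B by (intro dim_le_card) (auto intro: finite_subset)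
  with B show ?thesis
    by simp
qed

lemma independent_extend_within:
  fixes P T :: "'a::real_vector set"
  assumes "independent P"
  obtains Q where "Q \<subseteq> T" "independent (P \<union> Q)" "P \<inter> Q = {}" "T \<subseteq> span (P \<union> Q)"
proof -
  obtain B where B: "P \<subseteq> B" "B \<subseteq> P \<union> T" "independent B" "P \<union> T \<subseteq> span B"
    using maximal_independent_subset_extend[of P "P \<union> T"] assms by blast
  then have "P \<union> (B - P) = B"
    by blast
  with B show ?thesis
    by (intro that[of "B - P"]) auto
qed

lemma independent_Un_insert_0_eq:
  fixes P Q :: "'a::real_vector set"
  assumes ind: "independent (P \<union> Q)" and disj: "P \<inter> Q = {}"
    and v: "v \<in> insert 0 Q" and v': "v' \<in> insert 0 Q" and diff: "v - v' \<in> span P"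
  shows "v = v'"
proof (rule ccontr)
  assume "v \<noteq> v'"
  have "\<exists>w w'. w \<in> Q \<and> w' \<in> insert 0 Q \<and> w' \<noteq> w \<and> w - w' \<in> span P"
  proof (cases "v = 0")
    case True
    then show ?thesis
      using v' diff \<open>v \<noteq> v'\<close> span_neg[OF diff] by (intro exI[of _ v'] exI[of _ 0]) auto
  next
    case False
    then show ?thesis
      using v v' diff \<open>v \<noteq> v'\<close> by (intro exI[of _ v] exI[of _ v']) auto
  qed
  then obtain w w' where w: "w \<in> Q" "w' \<in> insert 0 Q" "w' \<noteq> w" "w - w' \<in> span P"
    by blast
  have "span P \<subseteq> span (P \<union> Q - {w})"
    using disj w(1) by (intro span_mono) blast
  moreover have "w' \<in> span (P \<union> Q - {w})"
    using w(2,3) by (auto intro: span_base span_zero)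
  ultimately have "(w - w') + w' \<in> span (P \<union> Q - {w})"
    using w(4) by (blast intro: span_add)
  then have "dependent (P \<union> Q)"
    using w(1) unfolding dependent_def by auto
  then show False
    using ind by contradiction
qed

lemma card_sumset_ge_independent_extension:
  fixes X Y :: "'a::real_vector set"
  assumes fin: "finite X" "finite Y" and y0: "y0 \<in> Y"
    and X: "(\<lambda>x. x - x0) ` X \<subseteq> span P" and Q: "Q \<subseteq> (\<lambda>y. y - y0) ` Y"
    and ind: "independent (P \<union> Q)" and disj: "P \<inter> Q = {}"
  shows "card X * (card Q + 1) \<le> card (sumset X Y)"
proof -
  let ?f = "\<lambda>(x, v). x + (y0 + v)"
  have "inj_on ?f (X \<times> insert 0 Q)"
  proof (rule inj_onI, clarify)
    fix x v x' v'
    assume xv: "x \<in> X" "v \<in> insert 0 Q" "x' \<in> X" "v' \<in> insert 0 Q"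
      and eq: "x + (y0 + v) = x' + (y0 + v')"
    have "v - v' = (x' - x0) - (x - x0)"
      using eq by (simp add: algebra_simps)
    also have "\<dots> \<in> span P"
      using X xv by (blast intro: span_diff)
    finally have "v = v'"
      using independent_Un_insert_0_eq[OF ind disj xv(2,4)] by blast
    with eq show "x = x' \<and> v = v'"
      by simp
  qed
  moreover have "?f ` (X \<times> insert 0 Q) \<subseteq> sumset X Y"
    using Q y0 unfolding sumset_def by force
  ultimately have "card (X \<times> insert 0 Q) \<le> card (sumset X Y)"
    using fin by (intro card_inj_on_le) (auto intro: finite_sumset)
  moreover have "0 \<notin> Q"
    using ind dependent_zero by blast
  moreover have "finite Q"
    using Q fin by (auto intro: finite_subset)
  ultimately show ?thesis
    by (simp add: card_cartesian_product)
qed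

lemma card_sumset_ge_codim:
  fixes X Y :: "'a::real_vector set" and x0 y0 :: 'a
  assumes fin: "finite X" "finite Y" and y0: "y0 \<in> Y"
  defines "X0 \<equiv> (\<lambda>x. x - x0) ` X" and "Y0 \<equiv> (\<lambda>y. y - y0) ` Y"
  shows "card X * (dim (X0 \<union> Y0) - dim X0 + 1) \<le> card (sumset X Y)"
proof -
  obtain P where P: "P \<subseteq> X0" "independent P" "X0 \<subseteq> span P" "card P = dim X0"
    by (rule basis_exists)
  obtain Q where Q: "Q \<subseteq> Y0" "independent (P \<union> Q)" "P \<inter> Q = {}" "Y0 \<subseteq> span (P \<union> Q)"
    using independent_extend_within[OF P(2)] by blast
  have "finite P" "finite Q"
    using P(1) Q(1) fin unfolding X0_def Y0_def by (auto intro: finite_subset)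
  moreover have "X0 \<union> Y0 \<subseteq> span (P \<union> Q)"
    using P(3) Q(4) span_mono[of P "P \<union> Q"] by blast
  ultimately have "dim (X0 \<union> Y0) \<le> card P + card Q"
    using Q(3) by (metis card_Un_disjoint dim_le_card finite_UnI)
  then have "card X * (dim (X0 \<union> Y0) - dim X0 + 1) \<le> card X * (card Q + 1)"
    using P(4) by (intro mult_le_mono2) linarith
  also have "\<dots> \<le> card (sumset X Y)"
    using card_sumset_ge_independent_extension[OF fin y0 P(3)[unfolded X0_def] Q(1-3)[unfolded Y0_def]] .
  finally show ?thesis .
qed

lemma card_sumset_ge_split:
  fixes X Y :: "'a::real_vector set" and x0 y0 :: 'a
  assumes fin: "finite X" "finite Y" and x0: "x0 \<in> X" and y0: "y0 \<in> Y"
  defines "X0 \<equiv> (\<lambda>x. x - x0) ` X" and "Y0 \<equiv> (\<lambda>y. y - y0) ` Y"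
  assumes k: "k \<le> dim X0"
  shows "(k + 1) * (dim Y0 - k + 1) \<le> card (sumset X Y)"
proof -
  obtain P where P: "P \<subseteq> X0" "independent P" "card P = dim X0"
    by (rule basis_exists)
  obtain P1 where P1: "P1 \<subseteq> P" "card P1 = k" "finite P1"
    using obtain_subset_with_card_n[of k P] k P(3) by metis
  have "independent P1"
    using P(2) P1(1) independent_mono by blast
  then obtain Q1 where Q1: "Q1 \<subseteq> Y0" "independent (P1 \<union> Q1)" "P1 \<inter> Q1 = {}" "Y0 \<subseteq> span (P1 \<union> Q1)"
    using independent_extend_within by blast
  have "finite Q1"
    using Q1(1) fin unfolding Y0_def by (auto intro: finite_subset)
  then have "dim Y0 \<le> k + card Q1"
    using Q1(3,4) P1 by (metis card_Un_disjoint dim_le_card finite_UnI)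
  define X1 where "X1 = (\<lambda>p. x0 + p) ` insert 0 P1"
  have "X1 \<subseteq> X"
    using P(1) P1(1) x0 unfolding X1_def X0_def by auto
  have "0 \<notin> P1"
    using \<open>independent P1\<close> dependent_zero by blast
  have "card X1 = card (insert 0 P1)"
    unfolding X1_def by (rule card_image) (simp add: inj_on_def)
  then have "card X1 = k + 1"
    using \<open>0 \<notin> P1\<close> P1(2,3) by simp
  have "(\<lambda>x. x - x0) ` X1 \<subseteq> span P1"
    unfolding X1_def by (auto intro: span_base span_zero)
  have "(k + 1) * (dim Y0 - k + 1) \<le> card X1 * (card Q1 + 1)"
    unfolding \<open>card X1 = k + 1\<close> using \<open>dim Y0 \<le> k + card Q1\<close> by (intro mult_le_mono2) linarith
  also have "\<dots> \<le> card (sumset X1 Y)"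
    using card_sumset_ge_independent_extension[OF _ fin(2) y0 \<open>(\<lambda>x. x - x0) ` X1 \<subseteq> span P1\<close>
        Q1(1)[unfolded Y0_def] Q1(2,3)] X1_def P1(3) by blast
  also have "\<dots> \<le> card (sumset X Y)"
    using \<open>X1 \<subseteq> X\<close> fin by (intro card_mono finite_sumset sumset_mono)
  finally show ?thesis .
qed

lemma diff_mem_span_translate_affine_hull:
  fixes S :: "'a::real_vector set"
  assumes "p \<in> affine hull S" "q \<in> affine hull S" "c \<in> affine hull S"
  shows "p - q \<in> span ((\<lambda>x. x - c) ` S)"
proof -
  have hull: "affine hull S = (\<lambda>x. c + x) ` span ((\<lambda>x. x - c) ` S)"
    using affine_hull_span_gen[OF assms(3)] by simp
  obtain u u' where "u \<in> span ((\<lambda>x. x - c) ` S)" "u' \<in> span ((\<lambda>x. x - c) ` S)"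
    "p = c + u" "q = c + u'"
    using assms(1,2) unfolding hull by blast
  then show ?thesis
    by (simp add: span_diff)
qed

lemma span_translate_affine_hull_eq:
  fixes S T :: "'a::real_vector set"
  assumes "affine hull S = affine hull T" "a \<in> S" "b \<in> T"
  shows "span ((\<lambda>x. x - a) ` S) = span ((\<lambda>x. x - b) ` T)"
proof -
  have "(\<lambda>x. x - a) ` S \<subseteq> span ((\<lambda>x. x - b) ` T)"
    if "affine hull S = affine hull T" "a \<in> S" "b \<in> T" for S T :: "'a set" and a b
  proof (rule image_subsetI)
    fix x
    assume "x \<in> S"
    then have "x \<in> affine hull T" "a \<in> affine hull T"
      using that(1,2) hull_inc[of _ S] by auto
    moreover have "b \<in> affine hull T"
      using that(3) by (rule hull_inc)
    ultimately show "x - a \<in> span ((\<lambda>x. x - b) ` T)"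
      by (rule diff_mem_span_translate_affine_hull)
  qed
  then show ?thesis
    using assms by (simp add: span_eq)
qed

lemma card_affine_basis_eq_dim:
  fixes B S :: "'a::real_vector set"
  assumes hull: "affine hull B = affine hull S" and B: "\<not> affine_dependent B"
    and S: "finite S" "a \<in> S"
  shows "card B = dim ((\<lambda>x. x - a) ` S) + 1"
proof -
  have "a \<in> affine hull B"
    using hull hull_inc[OF S(2)] by simp
  then obtain b where b: "b \<in> B"
    by (metis affine_hull_empty empty_iff equals0I)
  define D where "D = (\<lambda>x. x - b) ` (B - {b})"
  have indep: "independent D"
    using B affine_dependent_iff_dependent2[OF b] unfolding D_def by simp
  have "(\<lambda>x. x - b) ` B = insert 0 D"
    using b unfolding D_def by auto
  then have span_D: "span D = span ((\<lambda>x. x - a) ` S)"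
    using span_translate_affine_hull_eq[OF hull b S(2)] by simp
  have "finite D"
    using independent_span_bound[of "(\<lambda>x. x - a) ` S" D] indep S(1) span_D span_superset[of D]
    by simp
  have "B = insert b ((\<lambda>x. x + b) ` D)"
    using b unfolding D_def by (auto simp: image_image)
  moreover have "b \<notin> (\<lambda>x. x + b) ` D"
    using indep dependent_zero by force
  ultimately have "card B = card D + 1"
    using \<open>finite D\<close> by (simp add: card_image)
  also have "card D = dim ((\<lambda>x. x - a) ` S)"
    using span_D indep by (metis dim_eq_card_independent span_eq_dim)
  finally show ?thesis .
qed

lemma gen_aff_dim_eq_dim:
  fixes S :: "'a::real_vector set"
  assumes "finite S" "a \<in> S"
  shows "gen_aff_dim S = int (dim ((\<lambda>x. x - a) ` S))"
proof -
  have "\<exists>d B. affine hull B = affine hull S \<and> \<not> affine_dependent B \<and> int (card B) = d + 1"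
  proof -
    obtain B where "\<not> affine_dependent B" "affine hull S = affine hull B"
      using affine_basis_exists[of S] by blast
    then show ?thesis
      by (intro exI[of _ "int (card B) - 1"] exI[of _ B]) simp
  qed
  then have "\<exists>B. affine hull B = affine hull S \<and> \<not> affine_dependent B \<and>
      int (card B) = gen_aff_dim S + 1"
    unfolding gen_aff_dim_def by (rule someI_ex)
  then obtain B where "affine hull B = affine hull S" "\<not> affine_dependent B"
    "int (card B) = gen_aff_dim S + 1"
    by blast
  then show ?thesis
    using card_affine_basis_eq_dim[OF _ _ assms] by simp
qed

lemma gen_aff_dim_sumset:
  fixes X Y :: "'a::real_vector set"
  assumes fin: "finite X" "finite Y" and x0: "x0 \<in> X" and y0: "y0 \<in> Y"
  shows "gen_aff_dim (sumset X Y) = int (dim ((\<lambda>x. x - x0) ` X \<union> (\<lambda>y. y - y0) ` Y))"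
proof -
  let ?W = "(\<lambda>x. x - x0) ` X \<union> (\<lambda>y. y - y0) ` Y"
  let ?S0 = "(\<lambda>z. z - (x0 + y0)) ` sumset X Y"
  have "x0 + y0 \<in> sumset X Y"
    using x0 y0 unfolding sumset_def by blast
  then have "gen_aff_dim (sumset X Y) = int (dim ?S0)"
    using fin by (intro gen_aff_dim_eq_dim finite_sumset)
  also have "span ?S0 = span ?W"
  proof (rule span_eq[THEN iffD2], intro conjI subsetI)
    fix z
    assume "z \<in> ?S0"
    then obtain x y where "x \<in> X" "y \<in> Y" "z = (x - x0) + (y - y0)"
      unfolding sumset_def by auto
    then show "z \<in> span ?W"
      by (auto intro: span_add span_base)
  next
    fix z
    assume "z \<in> ?W"
    then obtain x y where "x \<in> X" "y \<in> Y" "z = (x + y) - (x0 + y0)"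
    proof (elim UnE imageE)
      fix x assume "z = x - x0" "x \<in> X"
      then show thesis
        using that[of x y0] y0 by simp
    next
      fix y assume "z = y - y0" "y \<in> Y"
      then show thesis
        using that[of x0 y] x0 by simp
    qed
    then have "z \<in> ?S0"
      unfolding sumset_def by blast
    then show "z \<in> span ?S0"
      by (rule span_base)
  qed
  then have "dim ?S0 = dim ?W"
    by (rule span_eq_dim)
  finally show ?thesis .
qed

lemma card_sumset_dimension_cases:
  fixes n m s d a b :: nat
  assumes "b \<le> d" and codim_a: "n * (d - a + 1) \<le> s" and codim_b: "m * (d - b + 1) \<le> s"
    and split: "\<And>k. k \<le> a \<Longrightarrow> (k + 1) * (b - k + 1) \<le> s"
  shows "n * (d + 2) \<le> 2 * s \<or> m * (d + 2) \<le> 2 * s \<or> (d + 2)\<^sup>2 \<le> 16 * s"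
proof -
  consider "2 * a \<le> d" | "2 * b \<le> d" | "d < 2 * a" "d < 2 * b"
    by linarith
  then show ?thesis
  proof cases
    case 1
    then have "n * (d + 2) \<le> n * (2 * (d - a + 1))"
      by (intro mult_le_mono2) arith
    with codim_a show ?thesis
      by linarith
  next
    case 2
    then have "m * (d + 2) \<le> m * (2 * (d - b + 1))"
      by (intro mult_le_mono2) arith
    with codim_b show ?thesis
      by linarith
  next
    case 3
    define k where "k = b div 2"
    have "d + 2 \<le> 4 * (k + 1)"
      using 3 unfolding k_def by presburger
    then have "(d + 2)\<^sup>2 \<le> (4 * (k + 1))\<^sup>2"
      by (rule power_mono) simp
    also have "\<dots> = 16 * ((k + 1) * (k + 1))"
      by (simp add: power2_eq_square algebra_simps)
    also have "(k + 1) * (k + 1) \<le> (k + 1) * (b - k + 1)"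
      unfolding k_def by (intro mult_le_mono2) linarith
    also have "\<dots> \<le> s"
      using 3 \<open>b \<le> d\<close> unfolding k_def by (intro split) linarith
    finally show ?thesis
      by simp
  qed
qed

lemma product_le_of_card_sumset_cases:
  fixes n m s d :: nat and L :: real
  assumes L: "1/512 \<le> L" and nm: "real n + real m \<le> (real d + 2) * L"
    and cases: "n * (d + 2) \<le> 2 * s \<or> m * (d + 2) \<le> 2 * s \<or> (d + 2)\<^sup>2 \<le> 16 * s"
  shows "real n * real m \<le> 2^10 * L\<^sup>2 * real s"
proof -
  have n: "real n \<le> (real d + 2) * L" and m: "real m \<le> (real d + 2) * L"
    using nm by simp_all
  have two_L: "2 * L * real s \<le> 2^10 * L\<^sup>2 * real s"
    using L by (intro mult_right_mono) (simp_all add: power2_eq_square)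
  consider "real n * (real d + 2) \<le> 2 * real s" | "real m * (real d + 2) \<le> 2 * real s"
    | "(real d + 2)\<^sup>2 \<le> 16 * real s"
    using cases unfolding of_nat_le_iff[where 'a=real, symmetric] by (auto simp: algebra_simps)
  then show ?thesis
  proof cases
    case 1
    have "real n * real m \<le> real n * ((real d + 2) * L)"
      using m by (intro mult_left_mono) simp_all
    also have "\<dots> \<le> 2 * real s * L"
      using 1 L by (simp add: mult.assoc[symmetric] mult_right_mono)
    finally show ?thesis
      using two_L by (simp add: mult_ac)
  next
    case 2
    have "real n * real m \<le> (real d + 2) * L * real m"
      using n by (intro mult_right_mono) simp_all
    also have "\<dots> \<le> 2 * real s * L"
      using 2 L by (simp add: mult_ac mult_right_mono)
    finally show ?thesis
      using two_L by (simp add: mult_ac)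
  next
    case 3
    have "real n * real m \<le> ((real d + 2) * L) * ((real d + 2) * L)"
      using n m by (intro mult_mono) simp_all
    also have "\<dots> = (real d + 2)\<^sup>2 * L\<^sup>2"
      by (simp add: power2_eq_square)
    also have "\<dots> \<le> 16 * real s * L\<^sup>2"
      using 3 by (intro mult_right_mono) simp_all
    also have "\<dots> \<le> 2^10 * L\<^sup>2 * real s"
      by (simp add: mult_ac)
    finally show ?thesis .
  qed
qed

lemma card_sumset_lower_bound:
  fixes X Y :: "'a::real_vector set"
  assumes fin: "finite X" "finite Y" and "X \<noteq> {}"
    and dim: "gen_aff_dim (sumset X Y) = int d"
    and size: "real (card X) + real (card Y) \<le> (real d + 2) * ln (real (card X))"
  shows "real (card X) * real (card Y) / (2^10 * (ln (real (card X)))\<^sup>2) \<le> real (card (sumset X Y))"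
proof (cases "Y = {}")
  case False
  obtain x0 y0 where x0: "x0 \<in> X" and y0: "y0 \<in> Y"
    using \<open>X \<noteq> {}\<close> False by blast
  define X0 Y0 where "X0 = (\<lambda>x. x - x0) ` X" and "Y0 = (\<lambda>y. y - y0) ` Y"
  have d: "d = dim (X0 \<union> Y0)"
    using gen_aff_dim_sumset[OF fin x0 y0] dim unfolding X0_def Y0_def by simp
  have "card X \<noteq> 1"
    using size by auto
  moreover have "card X \<noteq> 0"
    using fin(1) \<open>X \<noteq> {}\<close> by simp
  ultimately have "2 \<le> card X"
    by linarith
  then have "ln 2 \<le> ln (real (card X))"
    by simp
  then have "1/512 \<le> ln (real (card X))"
    using ln2_ge_two_thirds by linarith
  moreover have "card X * (d - dim X0 + 1) \<le> card (sumset X Y)"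
    using card_sumset_ge_codim[OF fin y0] unfolding d X0_def Y0_def .
  moreover have "card Y * (d - dim Y0 + 1) \<le> card (sumset X Y)"
    using card_sumset_ge_codim[of Y X x0 y0, OF fin(2,1) x0] sumset_commute[of X Y]
    unfolding d X0_def Y0_def by (simp add: Un_commute)
  moreover have "(k + 1) * (dim Y0 - k + 1) \<le> card (sumset X Y)" if "k \<le> dim X0" for k
    using card_sumset_ge_split[OF fin x0 y0] that unfolding X0_def Y0_def .
  moreover have "dim Y0 \<le> d"
    unfolding d using fin by (intro dim_subset_finite) (auto simp: X0_def Y0_def)
  ultimately have "real (card X) * real (card Y) \<le> 2^10 * (ln (real (card X)))\<^sup>2 * real (card (sumset X Y))"
    using size by (intro product_le_of_card_sumset_cases card_sumset_dimension_cases) auto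
  then show ?thesis
    by (simp add: divide_le_eq mult_ac)
qed simp

theorem lemma17:
  "\<exists>d0::nat. \<forall>d\<ge>d0. \<forall>X Y :: (nat \<Rightarrow> real) set.
     X \<subseteq> Rd d \<and> Y \<subseteq> Rd d \<and> finite X \<and> finite Y \<and> X \<noteq> {} \<and>
     (\<forall>C::real. real (card Y) = C * real (card X) \<longrightarrow> C \<le> ln (real (card X))) \<and>
     gen_aff_dim (sumset X Y) = int d \<and>
     (\<forall>K::real. real (card X) + real (card Y) = K * (real d + 2) \<longrightarrow> K \<le> ln (real (card X)))
     \<longrightarrow> real (card (sumset X Y)) \<ge> real (card X) * real (card Y) / (2^10 * (ln (real (card X)))^2)"
proof (intro exI[of _ 0] allI impI, elim conjE)
  fix d :: nat and X Y :: "(nat \<Rightarrow> real) set"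
  assume fin: "finite X" "finite Y" and "X \<noteq> {}" and dim: "gen_aff_dim (sumset X Y) = int d"
    and K: "\<forall>K::real. real (card X) + real (card Y) = K * (real d + 2) \<longrightarrow> K \<le> ln (real (card X))"
  have "(real (card X) + real (card Y)) / (real d + 2) \<le> ln (real (card X))"
    using K by simp
  then have "real (card X) + real (card Y) \<le> (real d + 2) * ln (real (card X))"
    by (simp add: divide_le_eq mult.commute)
  then show "real (card X) * real (card Y) / (2^10 * (ln (real (card X)))^2) \<le> real (card (sumset X Y))"
    by (rule card_sumset_lower_bound[OF fin \<open>X \<noteq> {}\<close> dim])
qed

end
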